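(* Let $\mathbb{F}$ be a field and $n \ge 1$ an integer. For each integer $K \ge 1$, let $M_n(K)$ denote the set of monomial ideals $I$ of $\mathbb{F}[X_1,\ldots,X_n]$ such that the quotient space $\mathbb{F}[X_1,\ldots,X_n]/I$ has dimension exactly $K$ over $\mathbb{F}$. Then $|M_n(1)| = 1$, and for every $K \ge 2$, $$|M_n(K)| \le K^n (K+n-2)^{(n-1)(K-1)} (2K-3)^{K-2}.$$ In particular, for every real number $R > 1$ there exists a constant $c$, depending only on $n$ and $R$, such that $|M_n(K)| \le c\, R^{K^{3/2}}$ for all integers $K \ge 1$.
   Context: A monomial ideal of $\mathbb{F}[X_1,\ldots,X_n]$ is an ideal generated by monomials $X_1^{j_1}\cdots X_n^{j_n}$. *)

theory Defs
  imports Complex_Main "HOL-Library.Poly_Mapping"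
begin

text \<open>Multivariate polynomials over a field 'a are represented as finitely supported
  maps from monomials (exponent vectors, nat =>0 nat) to coefficients; the ring
  structure (convolution product) is the one of HOL-Library.Poly_Mapping.
  The variables X_1,...,X_n are the indices 0,...,n-1.\<close>

type_synonym 'a mpoly = "(nat \<Rightarrow>\<^sub>0 nat) \<Rightarrow>\<^sub>0 'a"

definition polyring :: "nat \<Rightarrow> 'a::field mpoly set" where
  "polyring n = {p. \<forall>m \<in> Poly_Mapping.keys p. Poly_Mapping.keys m \<subseteq> {..<n}}"

definition monomials :: "nat \<Rightarrow> 'a::field mpoly set" where
  "monomials n = {Poly_Mapping.single m 1 | m. Poly_Mapping.keys m \<subseteq> {..<n}}"

definition is_ideal :: "nat \<Rightarrow> 'a::field mpoly set \<Rightarrow> bool" where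
  "is_ideal n I \<longleftrightarrow> I \<subseteq> polyring n \<and> 0 \<in> I \<and>
     (\<forall>p\<in>I. \<forall>q\<in>I. p + q \<in> I) \<and>
     (\<forall>r\<in>polyring n. \<forall>p\<in>I. r * p \<in> I)"

definition gen_ideal :: "nat \<Rightarrow> 'a::field mpoly set \<Rightarrow> 'a mpoly set" where
  "gen_ideal n S = \<Inter>{I. is_ideal n I \<and> S \<subseteq> I}"

definition monomial_ideal :: "nat \<Rightarrow> 'a::field mpoly set \<Rightarrow> bool" where
  "monomial_ideal n I \<longleftrightarrow> (\<exists>G \<subseteq> monomials n. I = gen_ideal n G)"

definition smult_mp :: "'a::field \<Rightarrow> 'a mpoly \<Rightarrow> 'a mpoly" where
  "smult_mp c p = Poly_Mapping.single 0 c * p"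

definition quot_dim :: "nat \<Rightarrow> 'a::field mpoly set \<Rightarrow> nat \<Rightarrow> bool" where
  "quot_dim n I K \<longleftrightarrow> (\<exists>B. finite B \<and> card B = K \<and> B \<subseteq> polyring n \<and>
     (\<forall>c. (\<Sum>b\<in>B. smult_mp (c b) b) \<in> I \<longrightarrow> (\<forall>b\<in>B. c b = 0)) \<and>
     (\<forall>p\<in>polyring n. \<exists>c. p - (\<Sum>b\<in>B. smult_mp (c b) b) \<in> I))"

definition M :: "'a::field itself \<Rightarrow> nat \<Rightarrow> nat \<Rightarrow> 'a mpoly set set" where
  "M _ n K = {I. monomial_ideal n I \<and> quot_dim n I K}"

end

theory Submission
  imports Defs "HOL-Real_Asymp.Real_Asymp"
begin

text \<open>A monomial ideal I is determined by its standard monomials, the exponent vectors m with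
  X^m not in I. They form a down-closed set (a staircase), and their classes are a basis of the
  quotient, so the staircase has K elements. Removing an element of maximal total degree from a
  staircase leaves a staircase, and the removed element is another element plus a unit vector e_t.
  Hence a staircase of size K is the set of a list 0 = m_0, ..., m_(K-1) in which every m_j is
  m_i + e_t for some i < j and t < n, so there are at most n^(K-1) (K-1)! of them. This is below
  the stated bound and is O(R^(K^(3/2))) for every R > 1.\<close>

lemma lookup_smult_mp: "Poly_Mapping.lookup (smult_mp c p) m = c * Poly_Mapping.lookup p m"
  unfolding smult_mp_def mult_map_scale_conv_mult[symmetric]
  by (simp add: Poly_Mapping.map.rep_eq when_def)

interpretation mp: vector_space "smult_mp :: 'a::field \<Rightarrow> 'a mpoly \<Rightarrow> 'a mpoly"
  by unfold_locales (auto intro!: poly_mapping_eqI simp: lookup_smult_mp lookup_add algebra_simps)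

lemma smult_mp_single_one: "smult_mp c (Poly_Mapping.single m 1) = Poly_Mapping.single m c"
  by (simp add: smult_mp_def mult_single)

lemma poly_mapping_eq_sum_monomials:
  "p = (\<Sum>m\<in>Poly_Mapping.keys p. smult_mp (Poly_Mapping.lookup p m) (Poly_Mapping.single m 1))"
  by (rule poly_mapping_eqI)
    (auto simp: smult_mp_single_one lookup_sum lookup_single when_def in_keys_iff)

lemma lookup_sum_monomials:
  assumes "finite S"
  shows "Poly_Mapping.lookup (\<Sum>m\<in>S. smult_mp (a m) (Poly_Mapping.single m 1)) m' =
    (if m' \<in> S then a m' else 0)"
  using assms by (simp add: smult_mp_single_one lookup_sum lookup_single when_def)

lemma inj_single_one: "inj (\<lambda>m. Poly_Mapping.single m (1::'a::zero_neq_one))"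
  by (rule injI) (metis lookup_single_eq lookup_single_not_eq one_neq_zero)

lemma span_monomials_keys:
  assumes "Poly_Mapping.keys p \<subseteq> S"
  shows "p \<in> mp.span ((\<lambda>m. Poly_Mapping.single m 1) ` S)"
proof -
  have "(\<Sum>m\<in>Poly_Mapping.keys p. smult_mp (Poly_Mapping.lookup p m) (Poly_Mapping.single m 1))
      \<in> mp.span ((\<lambda>m. Poly_Mapping.single m 1) ` S)"
    using assms by (intro mp.span_sum mp.span_scale mp.span_base) auto
  then show ?thesis
    using poly_mapping_eq_sum_monomials[of p] by simp
qed

lemma independent_monomials: "mp.independent ((\<lambda>m. Poly_Mapping.single m (1::'a::field)) ` T)"
  unfolding mp.independent_explicit_finite_subsets
proof (intro allI impI ballI)
  fix U u v
  assume U: "U \<subseteq> (\<lambda>m. Poly_Mapping.single m (1::'a)) ` T" "finite U"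
    and sum_eq: "(\<Sum>v\<in>U. smult_mp (u v) v) = 0" and v: "v \<in> U"
  obtain m where m: "v = Poly_Mapping.single m 1" using U v by blast
  have "0 = Poly_Mapping.lookup (\<Sum>v\<in>U. smult_mp (u v) v) m"
    using sum_eq by simp
  also have "\<dots> = (\<Sum>w\<in>U. u w * Poly_Mapping.lookup w m)"
    by (simp add: lookup_sum lookup_smult_mp)
  also have "\<dots> = u v * Poly_Mapping.lookup v m + (\<Sum>w\<in>U - {v}. u w * Poly_Mapping.lookup w m)"
    by (rule sum.remove[OF U(2) v])
  also have "(\<Sum>w\<in>U - {v}. u w * Poly_Mapping.lookup w m) = 0"
    using U m by (intro sum.neutral) (auto simp: lookup_single)
  finally show "u v = 0" using m by simp
qed

lemma (in vector_space) inj_on_independent_image: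
  assumes "finite B" and zero: "\<And>c. (\<Sum>b\<in>B. c b *s f b) = 0 \<Longrightarrow> \<forall>b\<in>B. c b = 0"
  shows "inj_on f B \<and> independent (f ` B)"
proof
  show inj: "inj_on f B"
  proof (rule inj_onI, rule ccontr)
    fix b1 b2 assume b: "b1 \<in> B" "b2 \<in> B" "f b1 = f b2" "b1 \<noteq> b2"
    define c :: "_ \<Rightarrow> 'a" where "c b = (if b = b1 then 1 else if b = b2 then -1 else 0)" for b
    have "(\<Sum>b\<in>B. c b *s f b) = (\<Sum>b\<in>{b1, b2}. c b *s f b)"
      using b \<open>finite B\<close> by (intro sum.mono_neutral_right) (auto simp: c_def)
    also have "\<dots> = 0"
      using b by (simp add: c_def)
    finally have "c b1 = 0" using zero b(1) by blast
    then show False by (simp add: c_def)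
  qed
  show "independent (f ` B)"
  proof (rule independent_if_scalars_zero)
    show "finite (f ` B)" using \<open>finite B\<close> by simp
    fix g x assume sum_eq: "(\<Sum>x\<in>f ` B. g x *s x) = 0" and x: "x \<in> f ` B"
    have "(\<Sum>b\<in>B. g (f b) *s f b) = 0"
      using sum_eq by (simp add: sum.reindex[OF inj])
    then show "g x = 0" using zero[of "\<lambda>b. g (f b)"] x by blast
  qed
qed

lemma polyring_single: "Poly_Mapping.keys m \<subseteq> {..<n} \<Longrightarrow> Poly_Mapping.single m c \<in> polyring n"
  by (simp add: polyring_def)

lemma polyring_add: "p \<in> polyring n \<Longrightarrow> q \<in> polyring n \<Longrightarrow> p + q \<in> polyring n"
  unfolding polyring_def using keys_add[of p q] by blast

lemma polyring_diff: "p \<in> polyring n \<Longrightarrow> q \<in> polyring n \<Longrightarrow> p - q \<in> polyring n"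
  unfolding polyring_def using keys_diff[of p q] by blast

lemma polyring_mult:
  assumes "p \<in> polyring n" "q \<in> polyring n"
  shows "p * q \<in> polyring n"
  unfolding polyring_def mem_Collect_eq
proof
  fix m assume "m \<in> Poly_Mapping.keys (p * q)"
  then obtain a b where "m = a + b" "a \<in> Poly_Mapping.keys p" "b \<in> Poly_Mapping.keys q"
    using keys_mult by blast
  then show "Poly_Mapping.keys m \<subseteq> {..<n}"
    using assms keys_add[of a b] unfolding polyring_def by blast
qed

lemma polyring_smult: "p \<in> polyring n \<Longrightarrow> smult_mp c p \<in> polyring n"
  unfolding smult_mp_def by (rule polyring_mult[OF polyring_single]) auto

lemma polyring_sum: "(\<And>x. x \<in> A \<Longrightarrow> f x \<in> polyring n) \<Longrightarrow> sum f A \<in> polyring n"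
  unfolding polyring_def using keys_sum[of f A] by blast

lemma zero_in_polyring [simp]: "0 \<in> polyring n"
  by (simp add: polyring_def)

lemma polyring_lincomb: "B \<subseteq> polyring n \<Longrightarrow> (\<Sum>b\<in>B. smult_mp (c b) b) \<in> polyring n"
  by (intro polyring_sum polyring_smult) auto

lemma is_ideal_polyring: "is_ideal n (polyring n)"
  by (auto simp: is_ideal_def intro: polyring_add polyring_mult)

lemma is_ideal_gen_ideal: "G \<subseteq> polyring n \<Longrightarrow> is_ideal n (gen_ideal n G)"
  using is_ideal_polyring[of n] by (auto simp: gen_ideal_def is_ideal_def)

lemma gen_ideal_subset: "G \<subseteq> gen_ideal n G"
  by (auto simp: gen_ideal_def)

lemma gen_ideal_least: "is_ideal n J \<Longrightarrow> G \<subseteq> J \<Longrightarrow> gen_ideal n G \<subseteq> J"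
  by (auto simp: gen_ideal_def)

lemma ideal_smult: "is_ideal n I \<Longrightarrow> p \<in> I \<Longrightarrow> smult_mp c p \<in> I"
  unfolding smult_mp_def is_ideal_def using polyring_single[of 0 n c] by auto

lemma ideal_sum: "is_ideal n I \<Longrightarrow> (\<And>x. x \<in> A \<Longrightarrow> f x \<in> I) \<Longrightarrow> sum f A \<in> I"
  by (induction A rule: infinite_finite_induct) (auto simp: is_ideal_def)

lemma ideal_if_monomials_mem:
  assumes I: "is_ideal n I"
    and monomials: "\<And>m. m \<in> Poly_Mapping.keys p \<Longrightarrow> Poly_Mapping.single m 1 \<in> I"
  shows "p \<in> I"
proof -
  have "(\<Sum>m\<in>Poly_Mapping.keys p. smult_mp (Poly_Mapping.lookup p m) (Poly_Mapping.single m 1)) \<in> I"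
    using monomials by (intro ideal_sum[OF I] ideal_smult[OF I])
  then show ?thesis
    using poly_mapping_eq_sum_monomials[of p] by simp
qed

section \<open>Monomial ideals and standard monomials\<close>

definition monom_dvd :: "(nat \<Rightarrow>\<^sub>0 nat) \<Rightarrow> (nat \<Rightarrow>\<^sub>0 nat) \<Rightarrow> bool" where
  "monom_dvd g m \<longleftrightarrow> (\<forall>i. Poly_Mapping.lookup g i \<le> Poly_Mapping.lookup m i)"

lemma monom_dvd_diff_add: "monom_dvd g m \<Longrightarrow> (m - g) + g = m"
  by (rule poly_mapping_eqI) (simp add: monom_dvd_def lookup_add lookup_minus)

lemma monom_dvd_trans: "monom_dvd f g \<Longrightarrow> monom_dvd g m \<Longrightarrow> monom_dvd f m"
  unfolding monom_dvd_def using order_trans by blast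

lemma monom_dvd_keys: "monom_dvd g m \<Longrightarrow> Poly_Mapping.keys g \<subseteq> Poly_Mapping.keys m"
  unfolding monom_dvd_def by (auto simp: in_keys_iff) (metis order.strict_trans2)

lemma monom_dvd_zero: "monom_dvd 0 m"
  by (simp add: monom_dvd_def)

lemma ideal_monomial_multiple:
  assumes I: "is_ideal n I" and g: "Poly_Mapping.single g 1 \<in> I"
    and dvd: "monom_dvd g m" and m: "Poly_Mapping.keys m \<subseteq> {..<n}"
  shows "Poly_Mapping.single m (1::'a::field) \<in> I"
proof -
  have "Poly_Mapping.single (m - g) (1::'a) \<in> polyring n"
    using keys_diff[of m g] monom_dvd_keys[OF dvd] m by (intro polyring_single) blast
  then have "Poly_Mapping.single (m - g) 1 * Poly_Mapping.single g 1 \<in> I"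
    using I g unfolding is_ideal_def by blast
  then show ?thesis
    by (simp add: mult_single monom_dvd_diff_add[OF dvd])
qed

lemma is_ideal_multiples:
  "is_ideal n {p :: 'a::field mpoly. p \<in> polyring n \<and>
     (\<forall>m\<in>Poly_Mapping.keys p. \<exists>g\<in>E. monom_dvd g m)}"
  (is "is_ideal n ?J")
proof -
  have "p + q \<in> ?J" if "p \<in> ?J" "q \<in> ?J" for p q
    using that keys_add[of p q] polyring_add[of p n q] by blast
  moreover have "r * p \<in> ?J" if r: "r \<in> polyring n" and p: "p \<in> ?J" for r p
  proof -
    have "\<exists>g\<in>E. monom_dvd g m" if mk: "m \<in> Poly_Mapping.keys (r * p)" for m
    proof -
      obtain a b where ab: "m = a + b" "a \<in> Poly_Mapping.keys r" "b \<in> Poly_Mapping.keys p"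
        using keys_mult[of r p] mk by blast
      then obtain g where "g \<in> E" "monom_dvd g b" using p by blast
      with ab show ?thesis by (auto simp: monom_dvd_def lookup_add intro: trans_le_add2)
    qed
    with r p show ?thesis by (simp add: polyring_mult)
  qed
  moreover have "?J \<subseteq> polyring n" "0 \<in> ?J" by auto
  ultimately show ?thesis
    unfolding is_ideal_def by blast
qed

lemma gen_ideal_monomials:
  assumes E: "\<forall>g\<in>E. Poly_Mapping.keys g \<subseteq> {..<n}"
  shows "gen_ideal n ((\<lambda>g. Poly_Mapping.single g (1::'a::field)) ` E) =
    {p. p \<in> polyring n \<and> (\<forall>m\<in>Poly_Mapping.keys p. \<exists>g\<in>E. monom_dvd g m)}"
    (is "gen_ideal n ?G = ?J")
proof
  have "?G \<subseteq> ?J"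
    using E by (auto intro!: polyring_single simp: monom_dvd_def)
  then show "gen_ideal n ?G \<subseteq> ?J"
    by (rule gen_ideal_least[OF is_ideal_multiples])
next
  have I: "is_ideal n (gen_ideal n ?G)"
    using E by (intro is_ideal_gen_ideal) (auto intro: polyring_single)
  show "?J \<subseteq> gen_ideal n ?G"
  proof
    fix p assume p: "p \<in> ?J"
    show "p \<in> gen_ideal n ?G"
    proof (rule ideal_if_monomials_mem[OF I])
      fix m assume m: "m \<in> Poly_Mapping.keys p"
      then obtain g where g: "g \<in> E" "monom_dvd g m" using p by blast
      have "Poly_Mapping.single g 1 \<in> gen_ideal n ?G"
        using g(1) gen_ideal_subset[of ?G n] by blast
      moreover have "Poly_Mapping.keys m \<subseteq> {..<n}" using p m by (auto simp: polyring_def)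
      ultimately show "Poly_Mapping.single m 1 \<in> gen_ideal n ?G"
        using ideal_monomial_multiple[OF I _ g(2)] by blast
    qed
  qed
qed

lemma monomial_idealE:
  assumes "monomial_ideal n (I :: 'a::field mpoly set)"
  obtains E where "\<forall>g\<in>E. Poly_Mapping.keys g \<subseteq> {..<n}"
    and "I = gen_ideal n ((\<lambda>g. Poly_Mapping.single g 1) ` E)"
proof -
  obtain G where G: "G \<subseteq> monomials n" "I = gen_ideal n G"
    using assms unfolding monomial_ideal_def by blast
  define E where "E = {g. Poly_Mapping.keys g \<subseteq> {..<n} \<and> Poly_Mapping.single g 1 \<in> G}"
  have G_eq: "G = (\<lambda>g. Poly_Mapping.single g 1) ` E"
  proof (intro subset_antisym subsetI)
    fix x assume x: "x \<in> G"
    then obtain m where "x = Poly_Mapping.single m 1" "Poly_Mapping.keys m \<subseteq> {..<n}"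
      using G(1) unfolding monomials_def by blast
    with x show "x \<in> (\<lambda>g. Poly_Mapping.single g 1) ` E"
      by (simp add: E_def)
  qed (auto simp: E_def)
  have "\<forall>g\<in>E. Poly_Mapping.keys g \<subseteq> {..<n}" by (simp add: E_def)
  from that[OF this] show thesis using G(2) G_eq by simp
qed

definition std :: "nat \<Rightarrow> 'a::field mpoly set \<Rightarrow> (nat \<Rightarrow>\<^sub>0 nat) set" where
  "std n I = {m. Poly_Mapping.keys m \<subseteq> {..<n} \<and> Poly_Mapping.single m 1 \<notin> I}"

definition downclosed :: "(nat \<Rightarrow>\<^sub>0 nat) set \<Rightarrow> bool" where
  "downclosed D \<longleftrightarrow> (\<forall>m\<in>D. \<forall>m'. monom_dvd m' m \<longrightarrow> m' \<in> D)"

lemma std_gen_ideal_monomials: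
  assumes "\<forall>g\<in>E. Poly_Mapping.keys g \<subseteq> {..<n}"
  shows "std n (gen_ideal n ((\<lambda>g. Poly_Mapping.single g (1::'a::field)) ` E)) =
    {m. Poly_Mapping.keys m \<subseteq> {..<n} \<and> (\<forall>g\<in>E. \<not> monom_dvd g m)}"
  unfolding std_def gen_ideal_monomials[OF assms] by (auto intro: polyring_single)

lemma monomial_ideal_mem_iff:
  assumes "monomial_ideal n I"
  shows "p \<in> I \<longleftrightarrow> p \<in> polyring n \<and> Poly_Mapping.keys p \<inter> std n I = {}"
proof -
  obtain E where E: "\<forall>g\<in>E. Poly_Mapping.keys g \<subseteq> {..<n}"
    and I: "I = gen_ideal n ((\<lambda>g. Poly_Mapping.single g 1) ` E)"
    using assms by (rule monomial_idealE)
  have "std n I = {m. Poly_Mapping.keys m \<subseteq> {..<n} \<and> (\<forall>g\<in>E. \<not> monom_dvd g m)}"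
    unfolding I by (rule std_gen_ideal_monomials[OF E])
  then show ?thesis
    unfolding I gen_ideal_monomials[OF E] by (auto simp: polyring_def disjoint_iff)
qed

lemma downclosed_std:
  assumes "monomial_ideal n I"
  shows "downclosed (std n I)"
proof -
  obtain E where E: "\<forall>g\<in>E. Poly_Mapping.keys g \<subseteq> {..<n}"
    and I: "I = gen_ideal n ((\<lambda>g. Poly_Mapping.single g 1) ` E)"
    using assms by (rule monomial_idealE)
  show ?thesis
    unfolding I std_gen_ideal_monomials[OF E] downclosed_def
    by (blast dest: monom_dvd_keys intro: monom_dvd_trans)
qed

section \<open>The dimension of the quotient\<close>

lift_definition restrict_keys :: "'b set \<Rightarrow> ('b \<Rightarrow>\<^sub>0 'a::zero) \<Rightarrow> 'b \<Rightarrow>\<^sub>0 'a"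
  is "\<lambda>S f x. if x \<in> S then f x else 0"
  by (erule finite_subset[rotated]) auto

lemma keys_restrict_keys: "Poly_Mapping.keys (restrict_keys S p) = Poly_Mapping.keys p \<inter> S"
  by (auto simp: in_keys_iff restrict_keys.rep_eq split: if_splits)

lemma restrict_keys_diff: "restrict_keys S (p - q) = restrict_keys S p - restrict_keys S q"
  by (rule poly_mapping_eqI) (simp add: restrict_keys.rep_eq lookup_minus)

lemma restrict_keys_sum_smult:
  "restrict_keys S (\<Sum>b\<in>B. smult_mp (c b) b) = (\<Sum>b\<in>B. smult_mp (c b) (restrict_keys S b))"
  by (rule poly_mapping_eqI) (simp add: restrict_keys.rep_eq lookup_sum lookup_smult_mp sum_distrib_left)

lemma restrict_keys_eq_sum_monomials:
  "finite S \<Longrightarrow> restrict_keys S p =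
     (\<Sum>m\<in>S. smult_mp (Poly_Mapping.lookup p m) (Poly_Mapping.single m 1))"
  by (rule poly_mapping_eqI) (simp add: restrict_keys.rep_eq lookup_sum_monomials)

lemma restrict_std_eq_0_iff:
  assumes "monomial_ideal n I" "p \<in> polyring n"
  shows "restrict_keys (std n I) p = 0 \<longleftrightarrow> p \<in> I"
  using assms by (simp add: monomial_ideal_mem_iff keys_restrict_keys flip: keys_eq_empty)

context
  fixes n K and I :: "'a::field mpoly set" and B :: "'a mpoly set"
  assumes mi: "monomial_ideal n I"
    and B: "finite B" "card B = K" "B \<subseteq> polyring n"
    and B_indep: "\<And>c. (\<Sum>b\<in>B. smult_mp (c b) b) \<in> I \<Longrightarrow> \<forall>b\<in>B. c b = 0"
    and B_span: "\<And>p. p \<in> polyring n \<Longrightarrow> \<exists>c. p - (\<Sum>b\<in>B. smult_mp (c b) b) \<in> I"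
begin

lemma inj_on_independent_restrict_std:
  "inj_on (restrict_keys (std n I)) B \<and> mp.independent (restrict_keys (std n I) ` B)"
proof (rule mp.inj_on_independent_image[OF B(1)])
  fix c assume "(\<Sum>b\<in>B. smult_mp (c b) (restrict_keys (std n I) b)) = 0"
  then have "restrict_keys (std n I) (\<Sum>b\<in>B. smult_mp (c b) b) = 0"
    by (simp add: restrict_keys_sum_smult)
  moreover have "(\<Sum>b\<in>B. smult_mp (c b) b) \<in> polyring n"
    using B(3) by (rule polyring_lincomb)
  ultimately show "\<forall>b\<in>B. c b = 0"
    using B_indep restrict_std_eq_0_iff[OF mi] by blast
qed

lemma std_monomials_subset_span:
  "(\<lambda>m. Poly_Mapping.single m 1) ` std n I \<subseteq> mp.span (restrict_keys (std n I) ` B)"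
proof clarify
  fix m assume m: "m \<in> std n I"
  then have m_poly: "Poly_Mapping.single m (1::'a) \<in> polyring n"
    by (auto simp: std_def intro: polyring_single)
  then obtain c where c: "Poly_Mapping.single m 1 - (\<Sum>b\<in>B. smult_mp (c b) b) \<in> I"
    using B_span by blast
  have "restrict_keys (std n I) (Poly_Mapping.single m (1::'a)) = Poly_Mapping.single m 1"
    using m by (intro poly_mapping_eqI) (auto simp: restrict_keys.rep_eq lookup_single when_def)
  moreover have "restrict_keys (std n I) (Poly_Mapping.single m 1 - (\<Sum>b\<in>B. smult_mp (c b) b)) = 0"
    using restrict_std_eq_0_iff[OF mi polyring_diff[OF m_poly polyring_lincomb[OF B(3)]]] c
    by blast
  ultimately have "Poly_Mapping.single m 1 = (\<Sum>b\<in>B. smult_mp (c b) (restrict_keys (std n I) b))"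
    by (simp add: restrict_keys_diff restrict_keys_sum_smult)
  also have "\<dots> \<in> mp.span (restrict_keys (std n I) ` B)"
    by (intro mp.span_sum mp.span_scale mp.span_base) auto
  finally show "Poly_Mapping.single m 1 \<in> mp.span (restrict_keys (std n I) ` B)" .
qed

lemma finite_card_std: "finite (std n I) \<and> card (std n I) = K"
proof -
  let ?Mon = "(\<lambda>m. Poly_Mapping.single m (1::'a)) ` std n I" and ?P = "restrict_keys (std n I) ` B"
  have P: "finite ?P" "card ?P = K" "mp.independent ?P"
    using B inj_on_independent_restrict_std by (auto simp: card_image)
  have "finite ?Mon \<and> card ?Mon \<le> card ?P"
    using mp.independent_span_bound[OF P(1) independent_monomials std_monomials_subset_span] .
  moreover have "?P \<subseteq> mp.span ?Mon"
    by (auto intro: span_monomials_keys simp: keys_restrict_keys)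
  then have "card ?P \<le> card ?Mon"
    using calculation mp.independent_span_bound[OF _ P(3)] by blast
  moreover have "inj_on (\<lambda>m. Poly_Mapping.single m (1::'a)) (std n I)"
    using inj_single_one by (rule inj_on_subset) simp
  ultimately show ?thesis
    using P(2) finite_imageD card_image by fastforce
qed

end

lemma card_std:
  "monomial_ideal n I \<Longrightarrow> quot_dim n I K \<Longrightarrow> finite (std n I) \<and> card (std n I) = K"
  unfolding quot_dim_def using finite_card_std by blast

lemma quot_dim_card_std:
  fixes I :: "'a::field mpoly set"
  assumes mi: "monomial_ideal n I" and fin: "finite (std n I)"
  shows "quot_dim n I (card (std n I))"
proof -
  let ?S = "std n I"
  let ?Mon = "(\<lambda>m. Poly_Mapping.single m (1::'a)) ` ?S"
  have inj: "inj_on (\<lambda>m. Poly_Mapping.single m (1::'a)) ?S"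
    using inj_single_one by (rule inj_on_subset) simp
  have sum_Mon: "(\<Sum>b\<in>?Mon. smult_mp (c b) b) =
      (\<Sum>m\<in>?S. smult_mp (c (Poly_Mapping.single m 1)) (Poly_Mapping.single m 1))" for c
    by (simp add: sum.reindex[OF inj])
  show ?thesis
    unfolding quot_dim_def
  proof (intro exI[of _ ?Mon] conjI allI impI ballI)
    show "finite ?Mon" "card ?Mon = card ?S"
      using fin by (simp_all add: card_image[OF inj])
    show "?Mon \<subseteq> polyring n"
      by (auto simp: std_def intro: polyring_single)
  next
    fix c b assume mem: "(\<Sum>b\<in>?Mon. smult_mp (c b) b) \<in> I" and b: "b \<in> ?Mon"
    then obtain m where m: "m \<in> ?S" "b = Poly_Mapping.single m 1" by blast
    let ?q = "\<Sum>m\<in>?S. smult_mp (c (Poly_Mapping.single m 1)) (Poly_Mapping.single m 1)"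
    have "Poly_Mapping.keys ?q \<subseteq> ?S"
      by (auto simp: in_keys_iff lookup_sum_monomials[OF fin] split: if_splits)
    then have "?q = 0"
      using mem monomial_ideal_mem_iff[OF mi] by (simp add: sum_Mon flip: keys_eq_empty) blast
    then show "c b = 0"
      using lookup_sum_monomials[OF fin, of "\<lambda>m. c (Poly_Mapping.single m 1)" m] m by simp
  next
    fix p :: "'a mpoly" assume p: "p \<in> polyring n"
    have "p - restrict_keys ?S p \<in> polyring n"
      using p by (intro polyring_diff) (auto simp: polyring_def keys_restrict_keys)
    moreover have "Poly_Mapping.keys (p - restrict_keys ?S p) \<inter> ?S = {}"
      by (auto simp: in_keys_iff lookup_minus restrict_keys.rep_eq)
    ultimately have "p - restrict_keys ?S p \<in> I"
      using monomial_ideal_mem_iff[OF mi] by blast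
    then show "\<exists>c. p - (\<Sum>b\<in>?Mon. smult_mp (c b) b) \<in> I"
      by (intro exI[of _ "\<lambda>b. Poly_Mapping.lookup p (the_elem (Poly_Mapping.keys b))"])
        (simp add: sum_Mon restrict_keys_eq_sum_monomials[OF fin])
  qed
qed

section \<open>Counting staircases\<close>

definition staircases :: "nat \<Rightarrow> nat \<Rightarrow> (nat \<Rightarrow>\<^sub>0 nat) set set" where
  "staircases n K = {D. finite D \<and> card D = K \<and> (\<forall>m\<in>D. Poly_Mapping.keys m \<subseteq> {..<n}) \<and> downclosed D}"

fun decode :: "(nat \<times> nat) list \<Rightarrow> (nat \<Rightarrow>\<^sub>0 nat) list" where
  "decode [] = [0]"
| "decode ((i, t) # cs) = (decode cs ! i + Poly_Mapping.single t 1) # decode cs"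

fun codes :: "nat \<Rightarrow> nat \<Rightarrow> (nat \<times> nat) list set" where
  "codes n 0 = {[]}"
| "codes n (Suc k) = (\<lambda>(c, cs). c # cs) ` (({..k} \<times> {..<n}) \<times> codes n k)"

lemma length_decode: "length (decode cs) = Suc (length cs)"
  by (induction cs rule: decode.induct) auto

lemma length_codes: "cs \<in> codes n k \<Longrightarrow> length cs = k"
  by (induction k arbitrary: cs) auto

lemma finite_card_codes: "finite (codes n k) \<and> card (codes n k) = n ^ k * fact k"
proof (induction k)
  case (Suc k)
  have "inj_on (\<lambda>(c, cs). c # cs) (({..k} \<times> {..<n}) \<times> codes n k)"
    by (auto intro!: inj_onI)
  then have "card (codes n (Suc k)) = (Suc k * n) * (n ^ k * fact k)"
    using Suc by (simp add: card_image card_cartesian_product)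
  then show ?case
    using Suc by (simp add: algebra_simps)
qed simp

definition degn :: "nat \<Rightarrow> (nat \<Rightarrow>\<^sub>0 nat) \<Rightarrow> nat" where
  "degn n m = (\<Sum>i<n. Poly_Mapping.lookup m i)"

lemma monom_dvd_degn_le_imp_eq:
  assumes dvd: "monom_dvd x y" and y: "Poly_Mapping.keys y \<subseteq> {..<n}" and le: "degn n y \<le> degn n x"
  shows "y = x"
proof (rule ccontr)
  assume "y \<noteq> x"
  then obtain i where "Poly_Mapping.lookup x i \<noteq> Poly_Mapping.lookup y i"
    using poly_mapping_eqI by metis
  then have i: "Poly_Mapping.lookup x i < Poly_Mapping.lookup y i"
    using dvd by (simp add: monom_dvd_def le_neq_implies_less)
  then have "i \<in> Poly_Mapping.keys y" by (simp add: in_keys_iff)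
  then have "i < n" using y by blast
  with i dvd have "degn n x < degn n y"
    unfolding degn_def monom_dvd_def by (intro sum_strict_mono_ex1) auto
  with le show False by simp
qed

lemma remove_unit_vector:
  assumes "t \<in> Poly_Mapping.keys x"
  shows "monom_dvd (x - Poly_Mapping.single t 1) x" and "x - Poly_Mapping.single t 1 \<noteq> x"
    and "x - Poly_Mapping.single t 1 + Poly_Mapping.single t 1 = x"
proof -
  show "monom_dvd (x - Poly_Mapping.single t 1) x"
    by (simp add: monom_dvd_def lookup_minus)
  have "Poly_Mapping.lookup (x - Poly_Mapping.single t 1) t \<noteq> Poly_Mapping.lookup x t"
    using assms by (simp add: lookup_minus in_keys_iff)
  then show "x - Poly_Mapping.single t 1 \<noteq> x" by metis
  show "x - Poly_Mapping.single t 1 + Poly_Mapping.single t 1 = x"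
    using assms by (intro poly_mapping_eqI)
      (auto simp: lookup_add lookup_minus lookup_single when_def in_keys_iff)
qed

lemma downclosed_remove_maximal:
  "downclosed D \<Longrightarrow> (\<forall>y\<in>D. monom_dvd x y \<longrightarrow> y = x) \<Longrightarrow> downclosed (D - {x})"
  unfolding downclosed_def by (metis Diff_iff singletonD)

lemma staircase_maximal_element:
  assumes D: "D \<in> staircases n K" "D \<noteq> {}"
  obtains x where "x \<in> D" "\<forall>y\<in>D. monom_dvd x y \<longrightarrow> y = x"
proof -
  have fin: "finite D" and keys: "\<forall>m\<in>D. Poly_Mapping.keys m \<subseteq> {..<n}"
    using D(1) by (simp_all add: staircases_def)
  have "Max (degn n ` D) \<in> degn n ` D"
    using fin D(2) by (intro Max_in) auto
  then obtain x where x: "x \<in> D" "degn n x = Max (degn n ` D)" by auto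
  have "y = x" if "y \<in> D" "monom_dvd x y" for y
  proof (rule monom_dvd_degn_le_imp_eq[OF that(2)])
    show "Poly_Mapping.keys y \<subseteq> {..<n}" using keys that(1) by blast
    show "degn n y \<le> degn n x" using x(2) fin that(1) by simp
  qed
  with x show thesis using that by blast
qed

lemma staircases_Suc_decode: "staircases n (Suc k) \<subseteq> (set \<circ> decode) ` codes n k"
proof (induction k)
  case 0
  show ?case
  proof
    fix D assume D: "D \<in> staircases n (Suc 0)"
    then obtain x where "D = {x}" by (auto simp: staircases_def card_Suc_eq)
    with D have "D = {0}"
      using monom_dvd_zero by (auto simp: staircases_def downclosed_def)
    then show "D \<in> (set \<circ> decode) ` codes n 0" by simp
  qed
next
  case (Suc k)
  show ?case
  proof
    fix D assume D: "D \<in> staircases n (Suc (Suc k))"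
    then have fin: "finite D" and keys: "\<forall>m\<in>D. Poly_Mapping.keys m \<subseteq> {..<n}"
      and down: "downclosed D" and card: "card D = Suc (Suc k)"
      by (simp_all add: staircases_def)
    have "D \<noteq> {}" using card by auto
    then obtain x where x: "x \<in> D" and max: "\<forall>y\<in>D. monom_dvd x y \<longrightarrow> y = x"
      by (rule staircase_maximal_element[OF D])
    have "D - {x} \<in> staircases n (Suc k)"
      using fin keys card x downclosed_remove_maximal[OF down max] by (simp add: staircases_def)
    then obtain cs where cs: "cs \<in> codes n k" "set (decode cs) = D - {x}"
      using Suc.IH by auto
    have "x \<noteq> 0"
    proof
      assume "x = 0"
      then have "D \<subseteq> {0}" using max monom_dvd_zero by blast
      then show False using card card_mono[of "{0}" D] by simp
    qed
    then obtain t where t: "t \<in> Poly_Mapping.keys x"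
      by (metis all_not_in_conv keys_eq_empty)
    define y where "y = x - Poly_Mapping.single t 1"
    have yx: "y + Poly_Mapping.single t 1 = x"
      using remove_unit_vector[OF t] by (simp add: y_def)
    have "y \<in> D - {x}"
      using remove_unit_vector[OF t] down x by (auto simp: y_def downclosed_def)
    then obtain i where i: "i < Suc k" "decode cs ! i = y"
      using cs by (metis in_set_conv_nth length_decode length_codes)
    have "(i, t) # cs \<in> codes n (Suc k)"
      using i(1) t keys x cs(1) by force
    moreover have "set (decode ((i, t) # cs)) = D"
      using cs(2) i(2) yx x by (simp add: insert_absorb)
    ultimately show "D \<in> (set \<circ> decode) ` codes n (Suc k)"
      by (metis comp_apply image_eqI)
  qed
qed

lemma finite_card_staircases:
  "finite (staircases n (Suc k)) \<and> card (staircases n (Suc k)) \<le> n ^ k * fact k"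
proof -
  have "finite ((set \<circ> decode) ` codes n k) \<and> card ((set \<circ> decode) ` codes n k) \<le> n ^ k * fact k"
    using finite_card_codes[of n k] card_image_le[of "codes n k" "set \<circ> decode"] by simp
  then show ?thesis
    using staircases_Suc_decode finite_subset card_mono le_trans by metis
qed

lemma finite_card_M:
  assumes "K \<ge> 1"
  shows "finite (M TYPE('a::field) n K) \<and> card (M TYPE('a) n K) \<le> n ^ (K - 1) * fact (K - 1)"
proof -
  have inj: "inj_on (std n) (M TYPE('a) n K)"
    by (rule inj_onI) (auto simp: M_def monomial_ideal_mem_iff)
  have "std n ` M TYPE('a) n K \<subseteq> staircases n (Suc (K - 1))"
    using assms card_std downclosed_std by (fastforce simp: M_def staircases_def std_def)
  then show ?thesis
    using finite_card_staircases[of n "K - 1"] finite_imageD[OF _ inj] card_image[OF inj]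
    by (metis card_mono finite_subset le_trans)
qed

lemma maximal_ideal_in_M1: "gen_ideal n ((\<lambda>i. Poly_Mapping.single (Poly_Mapping.single i 1) 1) ` {..<n})
    \<in> M TYPE('a::field) n 1"
proof -
  define E where "E = (\<lambda>i. Poly_Mapping.single i (1::nat)) ` {..<n}"
  let ?I = "gen_ideal n ((\<lambda>g. Poly_Mapping.single g (1::'a)) ` E)"
  have E: "\<forall>g\<in>E. Poly_Mapping.keys g \<subseteq> {..<n}" by (auto simp: E_def)
  have "(\<lambda>g. Poly_Mapping.single g (1::'a)) ` E \<subseteq> monomials n"
    using E by (auto simp: monomials_def)
  then have mi: "monomial_ideal n ?I"
    unfolding monomial_ideal_def by blast
  have "monom_dvd (Poly_Mapping.single i 1) m \<longleftrightarrow> i \<in> Poly_Mapping.keys m" for i m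
    by (auto simp: monom_dvd_def lookup_single when_def in_keys_iff)
  then have "std n ?I = {0}"
    unfolding std_gen_ideal_monomials[OF E] by (auto simp: E_def simp flip: keys_eq_empty) blast
  then have "quot_dim n ?I 1"
    using quot_dim_card_std[OF mi] by simp
  with mi show ?thesis
    by (simp add: M_def E_def image_image)
qed

section \<open>Numerical bounds\<close>

lemma fact_Suc_le_power: "fact (Suc m) \<le> Suc m ^ m"
proof (induction m)
  case (Suc m)
  have "fact (Suc (Suc m)) = Suc (Suc m) * fact (Suc m)" by simp
  also have "\<dots> \<le> Suc (Suc m) * Suc m ^ m"
    using Suc by (rule mult_le_mono2)
  also have "\<dots> \<le> Suc (Suc m) * Suc (Suc m) ^ m"
    by (intro mult_le_mono2 power_mono) auto
  finally show ?case by simp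
qed simp

lemma staircase_count_le_bound:
  assumes "K \<ge> 2" "n \<ge> 1"
  shows "n ^ (K - 1) * fact (K - 1) \<le> K ^ n * (K + n - 2) ^ ((n - 1) * (K - 1)) * (2 * K - 3) ^ (K - 2)"
proof -
  have "fact (K - 1) \<le> (K - 1) ^ (K - 2)"
    using fact_Suc_le_power[of "K - 2"] assms by (simp add: Suc_diff_Suc numeral_2_eq_2)
  also have "\<dots> \<le> (2 * K - 3) ^ (K - 2)"
    by (rule power_mono) (use assms in arith)+
  finally have fact_le: "fact (K - 1) \<le> (2 * K - 3) ^ (K - 2)" .
  have pow_le: "n ^ (K - 1) \<le> (K + n - 2) ^ ((n - 1) * (K - 1))"
  proof (cases "n = 1")
    case False
    have "n ^ (K - 1) \<le> (K + n - 2) ^ (K - 1)"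
      by (rule power_mono) (use assms in arith)+
    also have "\<dots> \<le> (K + n - 2) ^ ((n - 1) * (K - 1))"
      using False assms by (intro power_increasing) auto
    finally show ?thesis .
  qed simp
  have "n ^ (K - 1) * fact (K - 1) \<le> (K + n - 2) ^ ((n - 1) * (K - 1)) * (2 * K - 3) ^ (K - 2)"
    using mult_le_mono[OF pow_le fact_le] .
  also have "\<dots> \<le> K ^ n * ((K + n - 2) ^ ((n - 1) * (K - 1)) * (2 * K - 3) ^ (K - 2))"
    using assms by simp
  finally show ?thesis by (simp add: mult.assoc)
qed

lemma staircase_count_le_power_mult_self_power:
  assumes "n \<ge> 1"
  shows "n ^ (K - 1) * fact (K - 1) \<le> n ^ K * K ^ K"
proof (rule mult_le_mono)
  show "n ^ (K - 1) \<le> n ^ K"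
    using assms by (intro power_increasing) auto
  have "fact (K - 1) \<le> (fact K :: nat)"
    by (rule fact_mono_nat) simp
  also have "\<dots> \<le> K ^ K"
    using fact_le_power[of K, where 'a = nat] by simp
  finally show "fact (K - 1) \<le> K ^ K" .
qed

lemma power_mult_self_power_le_powr:
  fixes R :: real assumes R: "R > 1" and n: "n \<ge> 1"
  obtains c where "\<And>K. K \<ge> 1 \<Longrightarrow> real (n ^ K * K ^ K) \<le> c * R powr (real K powr (3 / 2))"
proof -
  define f where "f x = exp (x * ln (real n) + x * ln x - x powr (3/2) * ln R)" for x :: real
  have "ln R > 0" using R by simp
  then have "(f \<longlongrightarrow> 0) at_top"
    unfolding f_def using n by real_asymp
  then have "(\<lambda>K. f (real K)) \<longlonglongrightarrow> 0"
    using filterlim_compose filterlim_real_sequentially by blast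
  then obtain c where c: "\<And>K. norm (f (real K)) \<le> c"
    by (meson BseqE convergentI convergent_imp_Bseq)
  have "real (n ^ K * K ^ K) \<le> c * R powr (real K powr (3 / 2))" if K: "K \<ge> 1" for K
  proof -
    have "real (n ^ K * K ^ K) = f (real K) * exp (real K powr (3/2) * ln R)"
      using n K by (simp add: f_def exp_add exp_diff exp_of_nat_mult)
    also have "\<dots> \<le> c * exp (real K powr (3/2) * ln R)"
      using c[of K] by (intro mult_right_mono) auto
    finally show ?thesis using R by (simp add: powr_def mult.commute)
  qed
  then show thesis by (rule that)
qed

theorem mainTheorem1:
  fixes n :: nat
  assumes "n \<ge> 1"
  shows "card (M TYPE('a::field) n 1) = 1
    \<and> (\<forall>K\<ge>2. finite (M TYPE('a) n K) \<and>
         real (card (M TYPE('a) n K))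
           \<le> real K ^ n * real (K + n - 2) ^ ((n - 1) * (K - 1)) * real (2 * K - 3) ^ (K - 2))
    \<and> (\<forall>R::real. R > 1 \<longrightarrow> (\<exists>c::real. \<forall>K\<ge>1.
         real (card (M TYPE('a) n K)) \<le> c * R powr (real K powr (3 / 2))))"
proof (intro conjI allI impI)
  have "finite (M TYPE('a) n 1)" "card (M TYPE('a) n 1) \<le> 1"
    using finite_card_M[where 'a='a, of 1 n] by simp_all
  moreover have "M TYPE('a) n 1 \<noteq> {}"
    using maximal_ideal_in_M1 by blast
  ultimately show "card (M TYPE('a) n 1) = 1"
    by (simp add: le_antisym card_gt_0_iff Suc_le_eq)
next
  fix K :: nat assume K: "K \<ge> 2"
  then show "finite (M TYPE('a) n K)"
    using finite_card_M[where 'a='a] by simp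
  have "card (M TYPE('a) n K) \<le> K ^ n * (K + n - 2) ^ ((n - 1) * (K - 1)) * (2 * K - 3) ^ (K - 2)"
    using finite_card_M[where 'a='a, of K n] staircase_count_le_bound[OF K assms] K by simp
  then show "real (card (M TYPE('a) n K))
      \<le> real K ^ n * real (K + n - 2) ^ ((n - 1) * (K - 1)) * real (2 * K - 3) ^ (K - 2)"
    by (simp only: of_nat_le_iff flip: of_nat_mult of_nat_power)
next
  fix R :: real assume "R > 1"
  then obtain c where c: "\<And>K. K \<ge> 1 \<Longrightarrow> real (n ^ K * K ^ K) \<le> c * R powr (real K powr (3 / 2))"
    using power_mult_self_power_le_powr assms by blast
  have "real (card (M TYPE('a) n K)) \<le> c * R powr (real K powr (3 / 2))" if K: "K \<ge> 1" for K
  proof -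
    have "card (M TYPE('a) n K) \<le> n ^ K * K ^ K"
      using finite_card_M[where 'a='a, OF K] staircase_count_le_power_mult_self_power[OF assms]
      by (meson le_trans)
    then show ?thesis
      using c[OF K] by (meson of_nat_le_iff order_trans)
  qed
  then show "\<exists>c. \<forall>K\<ge>1. real (card (M TYPE('a) n K)) \<le> c * R powr (real K powr (3 / 2))"
    by blast
qed

end
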